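(* Let $a_1,\dots,a_l\in\mathbb{R}^n$, $b_1,\dots,b_l\in\mathbb{R}$ with $1\le m\le l$, let $D=\{x\in\mathbb{R}^n : \langle a_j,x\rangle\le b_j,\ j=m+1,\dots,l\}$ and $f(x)=\max_{i=1,\dots,m}[\langle a_i,x\rangle-b_i]+\delta_D(x)$, where none of the affine functions and none of the inequalities can be omitted in this representation. Let $x\in\operatorname{dom} f$ and $u\in\partial f(x)$. Then $$\operatorname{ind} f(x|u)=\{w\in\mathbb{R}^n : \exists\bar t>0\ \forall t\in(0,\bar t):\ u\in\partial f(x+tw)\}.$$
   Context: $\delta_D$ is the indicator function of $D$. For $f(x)\in\mathbb{R}$, $u\in\mathbb{R}^n$, $t>0$, $\xi\in\mathbb{R}^n$, the second-order difference quotient is $\Delta_t^2f(x|u)(\xi)=\frac{2}{t}\left[\frac{f(x+t\xi)-f(x)}{t}-\langle u,\xi\rangle\right]$, the second subderivative is $d^2f(x|u)(\xi)=\liminf_{t\searrow 0,\ \xi'\to\xi}\Delta_t^2f(x|u)(\xi')$, and the indicatrix of $f$ at $x$ relative to $u$ is $\operatorname{ind} f(x|u)=\{\xi\in\mathbb{R}^n : d^2f(x|u)(\xi)\le 1\}$. *)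

theory Defs
  imports "HOL-Analysis.Analysis"
begin

definition indic_fn :: "'a set \<Rightarrow> 'a \<Rightarrow> ereal" where
  "indic_fn D x = (if x \<in> D then 0 else \<infinity>)"

definition polyset :: "(nat \<Rightarrow> 'a::real_inner) \<Rightarrow> (nat \<Rightarrow> real) \<Rightarrow> nat set \<Rightarrow> 'a set" where
  "polyset a b J = {x. \<forall>j\<in>J. a j \<bullet> x \<le> b j}"

definition polyfun :: "(nat \<Rightarrow> 'a::real_inner) \<Rightarrow> (nat \<Rightarrow> real) \<Rightarrow> nat set \<Rightarrow> nat set \<Rightarrow> 'a \<Rightarrow> ereal" where
  "polyfun a b I J x = (SUP i\<in>I. ereal (a i \<bullet> x - b i)) + indic_fn (polyset a b J) x"

definition edom :: "('a \<Rightarrow> ereal) \<Rightarrow> 'a set" where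
  "edom f = {x. f x < \<infinity>}"

definition subdiff :: "('a::real_inner \<Rightarrow> ereal) \<Rightarrow> 'a \<Rightarrow> 'a set" where
  "subdiff f x = {u. \<forall>y. f x + ereal (u \<bullet> (y - x)) \<le> f y}"

definition sdq :: "('a::real_inner \<Rightarrow> ereal) \<Rightarrow> 'a \<Rightarrow> 'a \<Rightarrow> real \<Rightarrow> 'a \<Rightarrow> ereal" where
  "sdq f x u t \<xi> = ereal (2 / t) * ((f (x + t *\<^sub>R \<xi>) - f x) / ereal t - ereal (u \<bullet> \<xi>))"

definition second_subderiv :: "('a::real_inner \<Rightarrow> ereal) \<Rightarrow> 'a \<Rightarrow> 'a \<Rightarrow> 'a \<Rightarrow> ereal" where
  "second_subderiv f x u \<xi> = Liminf (at_right 0 \<times>\<^sub>F nhds \<xi>) (\<lambda>(t, \<xi>'). sdq f x u t \<xi>')"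

definition indicatrix :: "('a::real_inner \<Rightarrow> ereal) \<Rightarrow> 'a \<Rightarrow> 'a \<Rightarrow> 'a set" where
  "indicatrix f x u = {\<xi>. second_subderiv f x u \<xi> \<le> 1}"

end

theory Submission
  imports Defs
begin

text \<open>
  Write \<open>f = g + \<delta>\<^sub>D\<close> with \<open>g\<close> the maximum of the affine pieces and let \<open>K\<close> be the critical
  cone at \<open>x\<close> for \<open>u\<close>: the directions \<open>w\<close> that satisfy \<open>\<langle>a\<^sub>j,w\<rangle> \<le> 0\<close> for the active
  constraints and \<open>\<langle>a\<^sub>i,w\<rangle> \<le> \<langle>u,w\<rangle>\<close> for the active pieces. For \<open>w \<in> K\<close> the function \<open>f\<close> is
  affine with slope \<open>u\<close> on a short segment \<open>x + t w\<close>, so \<open>u\<close> stays a subgradient there and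
  the second-order difference quotient vanishes. For \<open>w \<notin> K\<close> either the ray leaves \<open>D\<close>
  at once, or some active \<open>a\<^sub>i\<close> (itself a subgradient at \<open>x\<close>) satisfies
  \<open>\<langle>a\<^sub>i - u,w\<rangle> = c > 0\<close>, which forces the quotient to be at least about \<open>c/t\<close>.
  Hence \<open>d\<^sup>2f(x|u)\<close> is the indicator of \<open>K\<close>, and both sets in the theorem equal \<open>K\<close>.
\<close>

lemma subdiff_iff_le_affine:
  fixes f :: "'a::real_inner \<Rightarrow> ereal"
  assumes "u \<in> subdiff f x"
  shows "u \<in> subdiff f y \<longleftrightarrow> f y \<le> f x + ereal (u \<bullet> (y - x))"
proof
  assume "u \<in> subdiff f y"
  then have "f y + ereal (u \<bullet> (x - y)) + ereal (u \<bullet> (y - x)) \<le> f x + ereal (u \<bullet> (y - x))"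
    by (intro add_right_mono) (simp add: subdiff_def)
  then show "f y \<le> f x + ereal (u \<bullet> (y - x))"
    by (simp add: add.assoc inner_diff_right)
next
  assume le: "f y \<le> f x + ereal (u \<bullet> (y - x))"
  show "u \<in> subdiff f y" unfolding subdiff_def
  proof (intro CollectI allI)
    fix z
    have "f y + ereal (u \<bullet> (z - y)) \<le> f x + ereal (u \<bullet> (y - x)) + ereal (u \<bullet> (z - y))"
      using le by (rule add_right_mono)
    also have "\<dots> = f x + ereal (u \<bullet> (z - x))"
      by (simp add: add.assoc inner_diff_right)
    also have "\<dots> \<le> f z"
      using assms by (simp add: subdiff_def)
    finally show "f y + ereal (u \<bullet> (z - y)) \<le> f z" .
  qed
qed

lemma subdiff_le_along:
  assumes "v \<in> subdiff f x"
  shows "f x + ereal (t * (v \<bullet> \<xi>)) \<le> f (x + t *\<^sub>R \<xi>)"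
proof -
  have "f x + ereal (v \<bullet> (x + t *\<^sub>R \<xi> - x)) \<le> f (x + t *\<^sub>R \<xi>)"
    using assms unfolding subdiff_def by blast
  then show ?thesis
    by simp
qed

lemma sdq_PInf:
  assumes "0 < t" "f x = ereal r" "f (x + t *\<^sub>R \<xi>) = \<infinity>"
  shows "sdq f x u t \<xi> = \<infinity>"
  using assms by (simp add: sdq_def)

lemma sdq_ereal:
  assumes "0 < t" "f x = ereal r" "f (x + t *\<^sub>R \<xi>) = ereal s"
  shows "sdq f x u t \<xi> = ereal (2 / t * ((s - r) / t - u \<bullet> \<xi>))"
  using assms by (simp add: sdq_def)

lemma sdq_ge_subgradient:
  assumes "0 < t" "f x = ereal r" "v \<in> subdiff f x"
  shows "ereal (2 / t * ((v - u) \<bullet> \<xi>)) \<le> sdq f x u t \<xi>"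
proof -
  have sub: "ereal r + ereal (t * (v \<bullet> \<xi>)) \<le> f (x + t *\<^sub>R \<xi>)"
    using subdiff_le_along[OF assms(3)] assms(2) by metis
  show ?thesis
  proof (cases "f (x + t *\<^sub>R \<xi>)")
    case (real s)
    then have "v \<bullet> \<xi> \<le> (s - r) / t"
      using sub \<open>0 < t\<close> by (simp add: field_simps)
    then have "2 / t * ((v - u) \<bullet> \<xi>) \<le> 2 / t * ((s - r) / t - u \<bullet> \<xi>)"
      using \<open>0 < t\<close> by (intro mult_left_mono) (auto simp: inner_diff_left)
    then show ?thesis
      using sdq_ereal[OF assms(1,2) real] by simp
  next
    case PInf
    then show ?thesis
      using sdq_PInf[of t f x r \<xi> u] assms(1,2) by simp
  next
    case MInf
    then show ?thesis
      using sub by simp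
  qed
qed

lemma eventually_at_right_mult_less:
  assumes "0 < d"
  shows "eventually (\<lambda>t::real. t * c < d) (at_right 0)"
proof -
  have "((\<lambda>t::real. t * c) \<longlongrightarrow> 0 * c) (at_right 0)"
    by (intro tendsto_intros)
  then show ?thesis
    using assms by (auto dest: order_tendstoD(2))
qed

lemma Liminf_antimono_filter: "F \<le> G \<Longrightarrow> Liminf G f \<le> Liminf F f"
  unfolding Liminf_def le_filter_def by (rule SUP_subset_mono) auto

lemma Liminf_prod_nhds_le: "Liminf (F \<times>\<^sub>F nhds w) h \<le> Liminf F (\<lambda>t. h (t, w))"
proof -
  have "principal {w} \<le> nhds w"
    by (simp add: le_filter_def eventually_principal eventually_nhds_x_imp_x)
  then have "filtermap (\<lambda>t. (t, w)) F \<le> F \<times>\<^sub>F nhds w"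
    unfolding prod_filter_principal_singleton2[symmetric] by (intro prod_filter_mono order_refl)
  then show ?thesis
    by (rule Liminf_antimono_filter[THEN order_trans]) (rule Liminf_filtermap_le)
qed

lemma second_subderiv_eq_PInfI:
  assumes "\<And>M. eventually (\<lambda>(t, \<xi>). ereal M \<le> sdq f x u t \<xi>) (at_right 0 \<times>\<^sub>F nhds w)"
  shows "second_subderiv f x u w = \<infinity>"
  unfolding second_subderiv_def
  by (rule ereal_top, rule Liminf_bounded) (use assms in \<open>simp add: case_prod_unfold\<close>)

lemma second_subderiv_nonneg:
  assumes "f x = ereal r" "u \<in> subdiff f x"
  shows "0 \<le> second_subderiv f x u w"
  unfolding second_subderiv_def
proof (rule Liminf_bounded)
  have "eventually (\<lambda>p. 0 < fst p \<and> True) (at_right (0::real) \<times>\<^sub>F nhds w)"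
    by (intro eventually_prodI eventually_at_right_less eventually_True)
  then show "eventually (\<lambda>p. 0 \<le> (case p of (t, \<xi>') \<Rightarrow> sdq f x u t \<xi>')) (at_right 0 \<times>\<^sub>F nhds w)"
  proof eventually_elim
    case (elim p)
    then show ?case
      using sdq_ge_subgradient[OF _ assms, of "fst p" u "snd p"] by (simp add: case_prod_unfold zero_ereal_def)
  qed
qed

lemma second_subderiv_nonpos_if_subgradient_along:
  assumes "f x = ereal r" "u \<in> subdiff f x"
    and "\<exists>tb>0. \<forall>t\<in>{0<..<tb}. u \<in> subdiff f (x + t *\<^sub>R w)"
  shows "second_subderiv f x u w \<le> 0"
proof -
  have "eventually (\<lambda>t. u \<in> subdiff f (x + t *\<^sub>R w)) (at_right 0)"
    using assms(3) unfolding eventually_at_right_field by auto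
  then have "eventually (\<lambda>t. sdq f x u t w = 0) (at_right 0)"
    using eventually_at_right_less[of 0]
  proof eventually_elim
    case (elim t)
    have "f (x + t *\<^sub>R w) \<le> f x + ereal (u \<bullet> (x + t *\<^sub>R w - x))"
      using elim(1) subdiff_iff_le_affine[OF assms(2)] by blast
    moreover have "f x + ereal (t * (u \<bullet> w)) \<le> f (x + t *\<^sub>R w)"
      using assms(2) by (rule subdiff_le_along)
    ultimately have "f (x + t *\<^sub>R w) = ereal (r + t * (u \<bullet> w))"
      using assms(1) by (intro antisym) simp_all
    then show ?case
      using sdq_ereal[of t f x r w _ u] elim(2) assms(1) by simp
  qed
  then have "Liminf (at_right 0) (\<lambda>t. sdq f x u t w) = Liminf (at_right (0::real)) (\<lambda>t. 0)"
    by (rule Liminf_eq)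
  also have "\<dots> = 0"
    by (simp add: Liminf_const)
  finally have "Liminf (at_right 0) (\<lambda>t. sdq f x u t w) = 0" .
  then show ?thesis
    unfolding second_subderiv_def
    using Liminf_prod_nhds_le[of "at_right 0" w "\<lambda>(t, \<xi>). sdq f x u t \<xi>"] by simp
qed

lemma second_subderiv_PInf_if_normal:
  assumes "f x = ereal r" "\<forall>y\<in>edom f. a \<bullet> y \<le> a \<bullet> x" "0 < a \<bullet> w"
  shows "second_subderiv f x u w = \<infinity>"
proof (rule second_subderiv_eq_PInfI)
  fix M
  have "((\<lambda>\<xi>. a \<bullet> \<xi>) \<longlongrightarrow> a \<bullet> w) (nhds w)"
    by (intro tendsto_intros filterlim_ident)
  then have "eventually (\<lambda>\<xi>. 0 < a \<bullet> \<xi>) (nhds w)"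
    using assms(3) by (rule order_tendstoD(1))
  then have "eventually (\<lambda>p. 0 < fst p \<and> 0 < a \<bullet> snd p) (at_right (0::real) \<times>\<^sub>F nhds w)"
    by (intro eventually_prodI eventually_at_right_less)
  then show "eventually (\<lambda>(t, \<xi>). ereal M \<le> sdq f x u t \<xi>) (at_right 0 \<times>\<^sub>F nhds w)"
  proof eventually_elim
    case (elim p)
    obtain t \<xi> where p: "p = (t, \<xi>)" by fastforce
    have "a \<bullet> x < a \<bullet> (x + t *\<^sub>R \<xi>)"
      using elim by (simp add: p inner_add_right)
    then have "f (x + t *\<^sub>R \<xi>) = \<infinity>"
      using assms(2) by (force simp: edom_def)
    then show ?case
      using sdq_PInf[of t f x r \<xi> u] elim assms(1) by (simp add: p)
  qed
qed

lemma second_subderiv_PInf_if_steeper: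
  assumes "f x = ereal r" "v \<in> subdiff f x" "u \<bullet> w < v \<bullet> w"
  shows "second_subderiv f x u w = \<infinity>"
proof (rule second_subderiv_eq_PInfI)
  fix M
  define c where "c = (v - u) \<bullet> w"
  have c: "0 < c"
    using assms(3) by (simp add: c_def inner_diff_left)
  have "((\<lambda>\<xi>. (v - u) \<bullet> \<xi>) \<longlongrightarrow> c) (nhds w)"
    unfolding c_def by (intro tendsto_intros filterlim_ident)
  then have "eventually (\<lambda>\<xi>. c / 2 < (v - u) \<bullet> \<xi>) (nhds w)"
    using c by (intro order_tendstoD(1)) auto
  moreover have "eventually (\<lambda>t. 0 < t \<and> t * M < c) (at_right (0::real))"
    using eventually_at_right_less eventually_at_right_mult_less[OF c]
    by (rule eventually_conj)
  ultimately have "eventually (\<lambda>p. (0 < fst p \<and> fst p * M < c) \<and> c / 2 < (v - u) \<bullet> snd p)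
      (at_right 0 \<times>\<^sub>F nhds w)"
    by (intro eventually_prodI)
  then show "eventually (\<lambda>(t, \<xi>). ereal M \<le> sdq f x u t \<xi>) (at_right 0 \<times>\<^sub>F nhds w)"
  proof eventually_elim
    case (elim p)
    obtain t \<xi> where p: "p = (t, \<xi>)" by fastforce
    then have t: "0 < t" "t * M < c" and xi: "c / 2 < (v - u) \<bullet> \<xi>"
      using elim by auto
    have "M < c / t"
      using t by (simp add: field_simps)
    also have "c / t = 2 / t * (c / 2)"
      by simp
    also have "\<dots> \<le> 2 / t * ((v - u) \<bullet> \<xi>)"
      using t xi by (intro mult_left_mono) auto
    finally have "ereal M \<le> ereal (2 / t * ((v - u) \<bullet> \<xi>))"
      by simp
    also have "\<dots> \<le> sdq f x u t \<xi>"
      using t(1) assms(1,2) by (rule sdq_ge_subgradient)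
    finally show ?case
      by (simp add: p)
  qed
qed

lemma SUP_ereal_eq_Max:
  assumes "finite I" "I \<noteq> {}"
  shows "(SUP i\<in>I. ereal (h i)) = ereal (Max (h ` I))"
proof -
  have "(SUP i\<in>I. ereal (h i)) = Max (ereal ` h ` I)"
    using assms by (simp add: cSup_eq_Max image_comp)
  also have "\<dots> = ereal (Max (h ` I))"
    using assms by (simp add: mono_Max_commute[symmetric] mono_def)
  finally show ?thesis .
qed

definition polymax :: "(nat \<Rightarrow> 'a::real_inner) \<Rightarrow> (nat \<Rightarrow> real) \<Rightarrow> nat set \<Rightarrow> 'a \<Rightarrow> real" where
  "polymax a b I y = Max ((\<lambda>i. a i \<bullet> y - b i) ` I)"

lemma polymax_ge:
  assumes "finite I" "i \<in> I"
  shows "a i \<bullet> y - b i \<le> polymax a b I y"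
  using assms by (simp add: polymax_def)

lemma polymax_le_iff:
  assumes "finite I" "I \<noteq> {}"
  shows "polymax a b I y \<le> c \<longleftrightarrow> (\<forall>i\<in>I. a i \<bullet> y - b i \<le> c)"
  using assms by (simp add: polymax_def)

lemma polyfun_eq_if:
  assumes "finite I" "I \<noteq> {}"
  shows "polyfun a b I J y = (if y \<in> polyset a b J then ereal (polymax a b I y) else \<infinity>)"
  using SUP_ereal_eq_Max[OF assms, of "\<lambda>i. a i \<bullet> y - b i"]
  by (simp add: polyfun_def indic_fn_def polymax_def)

lemma edom_polyfun:
  assumes "finite I" "I \<noteq> {}"
  shows "edom (polyfun a b I J) = polyset a b J"
  using assms by (simp add: edom_def polyfun_eq_if)

lemma active_piece_subgradient_polyfun:
  assumes "finite I" "I \<noteq> {}" "i \<in> I" "x \<in> polyset a b J"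
    and "a i \<bullet> x - b i = polymax a b I x"
  shows "a i \<in> subdiff (polyfun a b I J) x"
  unfolding subdiff_def
proof (intro CollectI allI)
  fix y
  have "polymax a b I x + a i \<bullet> (y - x) \<le> polymax a b I y" if "y \<in> polyset a b J"
    using polymax_ge[OF assms(1,3), of a y b] assms(5) by (simp add: inner_diff_right)
  then show "polyfun a b I J x + ereal (a i \<bullet> (y - x)) \<le> polyfun a b I J y"
    using assms(4) by (simp add: polyfun_eq_if[OF assms(1,2)])
qed

text \<open>The critical cone \<open>{w. df(x)(w) = \<langle>u,w\<rangle>}\<close> of \<open>polyfun a b I J\<close> at \<open>x\<close>, written out
  through the active constraints and the active affine pieces.\<close>

definition critical_cone ::
    "(nat \<Rightarrow> 'a::real_inner) \<Rightarrow> (nat \<Rightarrow> real) \<Rightarrow> nat set \<Rightarrow> nat set \<Rightarrow> 'a \<Rightarrow> 'a \<Rightarrow> 'a set" where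
  "critical_cone a b I J x u = {w. (\<forall>j\<in>J. a j \<bullet> x = b j \<longrightarrow> a j \<bullet> w \<le> 0) \<and>
      (\<forall>i\<in>I. a i \<bullet> x - b i = polymax a b I x \<longrightarrow> a i \<bullet> w \<le> u \<bullet> w)}"

lemma eventually_affine_le_at_right:
  fixes p q r s :: real
  assumes "p \<le> q" "p = q \<Longrightarrow> s \<le> r"
  shows "eventually (\<lambda>t. p + t * s \<le> q + t * r) (at_right 0)"
proof (cases "p = q")
  case True
  show ?thesis
    using eventually_at_right_less[of 0]
    by eventually_elim (use True assms(2) in \<open>simp add: mult_left_mono\<close>)
next
  case False
  then have "0 < q - p"
    using assms(1) by simp
  from eventually_at_right_mult_less[OF this, of "s - r"] show ?thesis
    by eventually_elim (simp add: algebra_simps)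
qed

lemma subgradient_along_critical_cone_polyfun:
  assumes "finite I" "I \<noteq> {}" "finite J" "x \<in> polyset a b J"
    and "u \<in> subdiff (polyfun a b I J) x" "w \<in> critical_cone a b I J x u"
  shows "\<exists>tb>0. \<forall>t\<in>{0<..<tb}. u \<in> subdiff (polyfun a b I J) (x + t *\<^sub>R w)"
proof -
  have "eventually (\<lambda>t. \<forall>j\<in>J. a j \<bullet> x + t * (a j \<bullet> w) \<le> b j + t * 0) (at_right 0)"
    using assms(3,4,6)
    by (intro eventually_ball_finite ballI eventually_affine_le_at_right)
       (auto simp: polyset_def critical_cone_def)
  moreover have "eventually (\<lambda>t. \<forall>i\<in>I. (a i \<bullet> x - b i) + t * (a i \<bullet> w)
      \<le> polymax a b I x + t * (u \<bullet> w)) (at_right 0)"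
    using assms(1,6)
    by (intro eventually_ball_finite ballI eventually_affine_le_at_right)
       (auto simp: polymax_ge critical_cone_def)
  ultimately have "eventually (\<lambda>t. u \<in> subdiff (polyfun a b I J) (x + t *\<^sub>R w)) (at_right 0)"
  proof eventually_elim
    case (elim t)
    then have "x + t *\<^sub>R w \<in> polyset a b J"
      and "polymax a b I (x + t *\<^sub>R w) \<le> polymax a b I x + t * (u \<bullet> w)"
      by (auto simp: polyset_def polymax_le_iff[OF assms(1,2)] inner_add_right algebra_simps)
    then show ?case
      using assms(4) by (simp add: subdiff_iff_le_affine[OF assms(5)] polyfun_eq_if[OF assms(1,2)])
  qed
  then show ?thesis
    unfolding eventually_at_right_field by auto
qed

lemma second_subderiv_polyfun:
  assumes "finite I" "I \<noteq> {}" "finite J" "x \<in> polyset a b J"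
    and "u \<in> subdiff (polyfun a b I J) x"
  shows "second_subderiv (polyfun a b I J) x u w = (if w \<in> critical_cone a b I J x u then 0 else \<infinity>)"
proof -
  let ?f = "polyfun a b I J"
  have fx: "?f x = ereal (polymax a b I x)"
    using assms(4) by (simp add: polyfun_eq_if[OF assms(1,2)])
  show ?thesis
  proof (cases "w \<in> critical_cone a b I J x u")
    case True
    then have "second_subderiv ?f x u w \<le> 0"
      by (intro second_subderiv_nonpos_if_subgradient_along[OF fx assms(5)]
          subgradient_along_critical_cone_polyfun[OF assms])
    then have "second_subderiv ?f x u w = 0"
      using second_subderiv_nonneg[OF fx assms(5)] by (rule antisym)
    with True show ?thesis
      by simp
  next
    case False
    then consider j where "j \<in> J" "a j \<bullet> x = b j" "0 < a j \<bullet> w"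
      | i where "i \<in> I" "a i \<bullet> x - b i = polymax a b I x" "u \<bullet> w < a i \<bullet> w"
      by (force simp: critical_cone_def)
    then show ?thesis
    proof cases
      case 1
      have "\<forall>y\<in>edom ?f. a j \<bullet> y \<le> a j \<bullet> x"
        using 1 by (auto simp: edom_polyfun[OF assms(1,2)] polyset_def)
      then show ?thesis
        using second_subderiv_PInf_if_normal[where f="?f", OF fx _ 1(3)] False by simp
    next
      case 2
      then show ?thesis
        using second_subderiv_PInf_if_steeper[where f="?f", OF fx active_piece_subgradient_polyfun[OF assms(1,2) _ assms(4)]]
          False by simp
    qed
  qed
qed

lemma subgradient_along_iff_critical_cone_polyfun:
  assumes "finite I" "I \<noteq> {}" "finite J" "x \<in> polyset a b J"
    and "u \<in> subdiff (polyfun a b I J) x"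
  shows "(\<exists>tb>0. \<forall>t\<in>{0<..<tb}. u \<in> subdiff (polyfun a b I J) (x + t *\<^sub>R w))
    \<longleftrightarrow> w \<in> critical_cone a b I J x u"
proof
  assume "\<exists>tb>0. \<forall>t\<in>{0<..<tb}. u \<in> subdiff (polyfun a b I J) (x + t *\<^sub>R w)"
  moreover have "polyfun a b I J x = ereal (polymax a b I x)"
    using assms(4) by (simp add: polyfun_eq_if[OF assms(1,2)])
  ultimately have "second_subderiv (polyfun a b I J) x u w \<le> 0"
    using assms(5) by (intro second_subderiv_nonpos_if_subgradient_along)
  then show "w \<in> critical_cone a b I J x u"
    using second_subderiv_polyfun[OF assms, of w] by (auto split: if_splits)
qed (rule subgradient_along_critical_cone_polyfun[OF assms])

theorem corollary4p8:
  fixes a :: "nat \<Rightarrow> real ^ 'n" and b :: "nat \<Rightarrow> real" and m l :: nat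
    and f :: "real ^ 'n \<Rightarrow> ereal" and x u :: "real ^ 'n"
  assumes "1 \<le> m" and "m \<le> l"
    and f_def: "f = polyfun a b {1..m} {m+1..l}"
    and irred_aff: "\<forall>i\<in>{1..m}. polyfun a b ({1..m} - {i}) {m+1..l} \<noteq> f"
    and irred_ineq: "\<forall>j\<in>{m+1..l}. polyfun a b {1..m} ({m+1..l} - {j}) \<noteq> f"
    and "x \<in> edom f" and "u \<in> subdiff f x"
  shows "indicatrix f x u = {w. \<exists>tb>0. \<forall>t\<in>{0<..<tb}. u \<in> subdiff f (x + t *\<^sub>R w)}"
proof -
  have I: "finite {1..m}" "{1..m} \<noteq> {}" and J: "finite {m+1..l}"
    using \<open>1 \<le> m\<close> by auto
  have x: "x \<in> polyset a b {m+1..l}"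
    using \<open>x \<in> edom f\<close> unfolding f_def edom_polyfun[OF I] .
  have "indicatrix f x u = critical_cone a b {1..m} {m+1..l} x u"
    using second_subderiv_polyfun[OF I J x] \<open>u \<in> subdiff f x\<close>
    by (auto simp: indicatrix_def f_def)
  also have "\<dots> = {w. \<exists>tb>0. \<forall>t\<in>{0<..<tb}. u \<in> subdiff f (x + t *\<^sub>R w)}"
    using subgradient_along_iff_critical_cone_polyfun[OF I J x] \<open>u \<in> subdiff f x\<close>
    by (auto simp: f_def)
  finally show ?thesis .
qed

end
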